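(* Let $G$ and $H$ be finite simple graphs. (1) If $g(G)=g(H)=3$, then $G \times H$ is not a cover graph. (2) If $g(G)>3 \geq \chi(H)$, then $G\times H$ is a cover graph.
   Context: $g(G)$ denotes the girth of $G$ (length of a shortest cycle, $\infty$ if $G$ has no cycles) and $\chi(H)$ the chromatic number. A graph is a cover graph if it is the underlying (undirected) graph of the Hasse diagram of some finite partially ordered set. The direct product $G \times H$ has vertex set $V(G)\times V(H)$, with $(g_i,h_s)$ adjacent to $(g_j,h_t)$ if and only if $g_ig_j \in E(G)$ and $h_sh_t \in E(H)$. *)

theory Defs
  imports Main "HOL-Library.Extended_Nat"
begin

type_synonym 'a graph = "'a set \<times> ('a \<times> 'a) set"

definition verts :: "'a graph \<Rightarrow> 'a set" where "verts G = fst G"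
definition edges :: "'a graph \<Rightarrow> ('a \<times> 'a) set" where "edges G = snd G"

definition finite_simple_graph :: "'a graph \<Rightarrow> bool" where
  "finite_simple_graph G \<longleftrightarrow> finite (verts G) \<and> edges G \<subseteq> verts G \<times> verts G
     \<and> sym (edges G) \<and> irrefl (edges G)"

definition is_cycle :: "'a graph \<Rightarrow> 'a list \<Rightarrow> bool" where
  "is_cycle G xs \<longleftrightarrow> length xs \<ge> 3 \<and> distinct xs \<and> set xs \<subseteq> verts G \<and>
     (\<forall>i < length xs. (xs ! i, xs ! ((i + 1) mod length xs)) \<in> edges G)"

(* girth: length of a shortest cycle, \<infinity> if acyclic *)
definition girth :: "'a graph \<Rightarrow> enat" where
  "girth G = (INF xs \<in> {xs. is_cycle G xs}. enat (length xs))"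

definition proper_colouring :: "'a graph \<Rightarrow> nat \<Rightarrow> ('a \<Rightarrow> nat) \<Rightarrow> bool" where
  "proper_colouring G k c \<longleftrightarrow> (\<forall>v \<in> verts G. c v < k) \<and> (\<forall>(u,v) \<in> edges G. c u \<noteq> c v)"

definition chromatic_number :: "'a graph \<Rightarrow> nat" where
  "chromatic_number G = (LEAST k. \<exists>c. proper_colouring G k c)"

definition covers :: "('a \<times> 'a) set \<Rightarrow> 'a \<Rightarrow> 'a \<Rightarrow> bool" where
  "covers R u v \<longleftrightarrow> (u, v) \<in> R \<and> u \<noteq> v \<and>
     \<not> (\<exists>w. (u, w) \<in> R \<and> (w, v) \<in> R \<and> w \<noteq> u \<and> w \<noteq> v)"

definition cover_graph :: "'a graph \<Rightarrow> bool" where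
  "cover_graph G \<longleftrightarrow> (\<exists>R. partial_order_on (verts G) R \<and>
     (\<forall>u \<in> verts G. \<forall>v \<in> verts G. (u, v) \<in> edges G \<longleftrightarrow> covers R u v \<or> covers R v u))"

definition direct_product :: "'a graph \<Rightarrow> 'b graph \<Rightarrow> ('a \<times> 'b) graph" where
  "direct_product G H = (verts G \<times> verts H,
     {((g, h), (g', h')). (g, g') \<in> edges G \<and> (h, h') \<in> edges H})"

end

theory Submission
  imports Defs
begin

(*
  A cover graph is triangle-free: among three pairwise covering-related elements two of the
  coverings form a chain x < y < z, and then x, z cannot be a covering pair. A triangle in both
  factors gives one in G \<times> H, which settles (1).
  For (2), colour G \<times> H by a proper 3-colouring c of H (via the second coordinate) and orient every
  edge towards the larger colour. The reflexive-transitive closure of this orientation is a partial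
  order whose chains have at most three elements. An edge u \<rightarrow> v fails to be a covering pair only
  if u \<rightarrow> w \<rightarrow> v for some w, i.e. only if u, w, v span a triangle; but the first coordinates of
  a triangle in G \<times> H span a triangle in G, which girth G > 3 excludes.
*)

definition triangle :: "'a graph \<Rightarrow> 'a \<Rightarrow> 'a \<Rightarrow> 'a \<Rightarrow> bool" where
  "triangle G a b c \<longleftrightarrow> (a, b) \<in> edges G \<and> (b, c) \<in> edges G \<and> (c, a) \<in> edges G"

lemma is_cycle_length_3_iff:
  "is_cycle G [a, b, c] \<longleftrightarrow> distinct [a, b, c] \<and> {a, b, c} \<subseteq> verts G \<and> triangle G a b c"
proof -
  have "(\<forall>i<length [a, b, c]. ([a, b, c] ! i, [a, b, c] ! ((i + 1) mod length [a, b, c])) \<in> edges G)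
          \<longleftrightarrow> triangle G a b c"
    by (auto simp: All_less_Suc triangle_def)
  then show ?thesis
    unfolding is_cycle_def by simp
qed

lemma girth_eq_3_imp_triangle:
  assumes "girth G = 3"
  obtains a b c where "triangle G a b c"
proof -
  have "(INF xs \<in> {xs. is_cycle G xs}. enat (length xs)) < 4"
    using assms by (simp add: girth_def)
  then obtain xs where cyc: "is_cycle G xs" and "enat (length xs) < 4"
    by (auto simp: INF_less_iff)
  moreover have "length xs \<ge> 3"
    using cyc by (simp add: is_cycle_def)
  ultimately have "length xs = Suc (Suc (Suc 0))"
    by (simp add: numeral_eq_enat)
  then obtain a b c where "xs = [a, b, c]"
    by (metis length_0_conv length_Suc_conv)
  with cyc have "triangle G a b c"
    by (simp add: is_cycle_length_3_iff)
  then show thesis by (rule that)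
qed

lemma girth_le_3_if_triangle:
  assumes "irrefl (edges G)" "edges G \<subseteq> verts G \<times> verts G" "triangle G a b c"
  shows "girth G \<le> 3"
proof -
  have "is_cycle G [a, b, c]"
    using assms unfolding is_cycle_length_3_iff triangle_def irrefl_def by auto
  then have "girth G \<le> enat (length [a, b, c])"
    unfolding girth_def by (rule INF_lower[OF CollectI])
  then show ?thesis
    by (simp add: numeral_eq_enat numeral_3_eq_3)
qed

lemma covers_chain_not_covers:
  assumes "partial_order_on V R" "covers R x y" "covers R y z"
  shows "\<not> covers R x z \<and> \<not> covers R z x"
proof -
  have "trans R" "antisym R"
    using assms(1) by (auto simp: partial_order_on_def preorder_on_def)
  moreover have "(x, y) \<in> R" "(y, z) \<in> R" "x \<noteq> y" "y \<noteq> z"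
    using assms(2,3) by (auto simp: covers_def)
  ultimately have "(x, z) \<in> R" "x \<noteq> z"
    by (metis transD, metis antisymD)
  then show ?thesis
    using \<open>antisym R\<close> \<open>(x, y) \<in> R\<close> \<open>(y, z) \<in> R\<close> \<open>x \<noteq> y\<close> \<open>y \<noteq> z\<close>
    by (auto simp: covers_def dest: antisymD)
qed

lemma cover_graph_triangle_free:
  assumes "cover_graph K" "edges K \<subseteq> verts K \<times> verts K"
  shows "\<not> triangle K a b c"
proof
  assume tri: "triangle K a b c"
  obtain R where po: "partial_order_on (verts K) R"
    and cov: "\<And>u v. u \<in> verts K \<Longrightarrow> v \<in> verts K \<Longrightarrow>
                 (u, v) \<in> edges K \<longleftrightarrow> covers R u v \<or> covers R v u"
    using assms(1) unfolding cover_graph_def by blast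
  have "covers R a b \<or> covers R b a" "covers R b c \<or> covers R c b" "covers R c a \<or> covers R a c"
    using tri assms(2) cov unfolding triangle_def by blast+
  \<comment> \<open>every orientation of a triangle contains a directed path of length two\<close>
  then show False
    using covers_chain_not_covers[OF po] by metis
qed

lemma finite_simple_graph_direct_product:
  assumes "finite_simple_graph G" "finite_simple_graph H"
  shows "finite_simple_graph (direct_product G H)"
  using assms
  by (auto simp: finite_simple_graph_def direct_product_def verts_def edges_def
           sym_def irrefl_def)

lemma triangle_direct_product:
  "triangle G a b c \<Longrightarrow> triangle H a' b' c' \<Longrightarrow>
     triangle (direct_product G H) (a, a') (b, b') (c, c')"
  by (simp add: triangle_def direct_product_def edges_def)

lemma triangle_direct_product_fst:
  "triangle (direct_product G H) u v w \<Longrightarrow> triangle G (fst u) (fst v) (fst w)"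
  by (auto simp: triangle_def direct_product_def edges_def)

lemma proper_colouring_direct_product_snd:
  "proper_colouring H k c \<Longrightarrow> proper_colouring (direct_product G H) k (c \<circ> snd)"
  by (auto simp: proper_colouring_def direct_product_def verts_def edges_def)

lemma proper_colouring_chromatic_number:
  assumes "finite_simple_graph H"
  obtains c where "proper_colouring H (chromatic_number H) c"
proof -
  have "finite (verts H)"
    using assms by (simp add: finite_simple_graph_def)
  from finite_imp_inj_to_nat_seg[OF this]
  obtain f :: "'a \<Rightarrow> nat" and n where f: "f ` verts H = {i. i < n}" "inj_on f (verts H)"
    by blast
  have "f u \<noteq> f v" if "(u, v) \<in> edges H" for u v
  proof -
    have "u \<noteq> v" "u \<in> verts H" "v \<in> verts H"
      using assms that unfolding finite_simple_graph_def irrefl_def by auto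
    then show ?thesis
      using f(2) by (auto dest: inj_onD)
  qed
  then have "proper_colouring H n f"
    using f(1) unfolding proper_colouring_def by blast
  then have "\<exists>k c. proper_colouring H k c"
    by blast
  then have "\<exists>c. proper_colouring H (chromatic_number H) c"
    unfolding chromatic_number_def by (rule LeastI_ex)
  then show thesis
    using that by blast
qed

lemma proper_colouring_mono:
  "proper_colouring H k c \<Longrightarrow> k \<le> m \<Longrightarrow> proper_colouring H m c"
  by (fastforce simp: proper_colouring_def)

definition colour_orientation :: "'a graph \<Rightarrow> ('a \<Rightarrow> nat) \<Rightarrow> ('a \<times> 'a) set" where
  "colour_orientation K c = {(u, v) \<in> edges K. c u < c v}"

definition colour_order :: "'a graph \<Rightarrow> ('a \<Rightarrow> nat) \<Rightarrow> ('a \<times> 'a) set" where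
  "colour_order K c = Id_on (verts K) \<union> (colour_orientation K c)\<^sup>+"

lemma colour_orientation_trancl_less:
  "(u, v) \<in> (colour_orientation K c)\<^sup>+ \<Longrightarrow> c u < c v"
  by (induction rule: trancl_induct) (auto simp: colour_orientation_def)

lemma colour_orientation_trancl_jump:
  assumes "(u, v) \<in> (colour_orientation K c)\<^sup>+" "(u, v) \<notin> colour_orientation K c"
  shows "c u + 2 \<le> c v"
proof -
  obtain w where uw: "(u, w) \<in> (colour_orientation K c)\<^sup>+" and wv: "(w, v) \<in> colour_orientation K c"
    using assms by (meson tranclE)
  have "c u < c w"
    using uw by (rule colour_orientation_trancl_less)
  moreover have "c w < c v"
    using wv by (simp add: colour_orientation_def)
  ultimately show ?thesis by linarith
qed

lemma partial_order_colour_order: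
  assumes "edges K \<subseteq> verts K \<times> verts K"
  shows "partial_order_on (verts K) (colour_order K c)"
proof -
  have "colour_orientation K c \<subseteq> verts K \<times> verts K"
    using assms by (auto simp: colour_orientation_def)
  then have "(colour_orientation K c)\<^sup>+ \<subseteq> verts K \<times> verts K"
    by (rule trancl_subset_Sigma)
  then have "colour_order K c \<subseteq> verts K \<times> verts K"
    unfolding colour_order_def by blast
  moreover have "refl_on (verts K) (colour_order K c)"
    unfolding refl_on_def colour_order_def by blast
  moreover have "trans (colour_order K c)"
    unfolding colour_order_def trans_def by (blast intro: trancl_trans)
  moreover have "antisym (colour_order K c)"
    unfolding colour_order_def antisym_def
    by (auto dest!: colour_orientation_trancl_less)
  ultimately show ?thesis
    by (simp add: partial_order_on_def preorder_on_def)
qed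

lemma covers_colour_order_imp_orientation:
  assumes "covers (colour_order K c) u v"
  shows "(u, v) \<in> colour_orientation K c"
proof (rule ccontr)
  let ?O = "colour_orientation K c"
  assume "(u, v) \<notin> ?O"
  moreover have "(u, v) \<in> ?O\<^sup>+"
    using assms unfolding covers_def colour_order_def by blast
  ultimately obtain w where uw: "(u, w) \<in> ?O\<^sup>+" and wv: "(w, v) \<in> ?O"
    by (meson tranclE)
  have "c u < c w"
    using uw by (rule colour_orientation_trancl_less)
  moreover have "c w < c v"
    using wv by (simp add: colour_orientation_def)
  ultimately show False
    using assms uw wv unfolding covers_def colour_order_def by blast
qed

lemma covers_colour_order_if_orientation:
  assumes "sym (edges K)" "edges K \<subseteq> verts K \<times> verts K"
    and "\<And>a b d. \<not> triangle K a b d" "\<forall>x \<in> verts K. c x < 3"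
    and uv: "(u, v) \<in> colour_orientation K c"
  shows "covers (colour_order K c) u v"
proof -
  let ?O = "colour_orientation K c"
  have "\<not> ((u, w) \<in> ?O\<^sup>+ \<and> (w, v) \<in> ?O\<^sup>+)" for w
  proof
    assume "(u, w) \<in> ?O\<^sup>+ \<and> (w, v) \<in> ?O\<^sup>+"
    then have uw: "(u, w) \<in> ?O\<^sup>+" and wv: "(w, v) \<in> ?O\<^sup>+" by blast+
    have "c v < 3"
      using uv assms(2,4) by (auto simp: colour_orientation_def)
    moreover have "c u < c w" "c w < c v"
      using uw wv by (blast intro: colour_orientation_trancl_less)+
    \<comment> \<open>with only three colours neither step can skip a colour, so both are single edges\<close>
    ultimately have "(u, w) \<in> ?O" "(w, v) \<in> ?O"
      using colour_orientation_trancl_jump[OF uw] colour_orientation_trancl_jump[OF wv]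
      by linarith+
    then have "triangle K u w v"
      using uv assms(1) by (auto simp: triangle_def colour_orientation_def dest: symD)
    then show False
      using assms(3) by blast
  qed
  moreover have "u \<noteq> v" "(u, v) \<in> colour_order K c"
    using uv by (auto simp: colour_orientation_def colour_order_def)
  ultimately show ?thesis
    unfolding covers_def colour_order_def by blast
qed

lemma cover_graph_if_triangle_free_3_colourable:
  assumes "sym (edges K)" "edges K \<subseteq> verts K \<times> verts K"
    and "\<And>a b d. \<not> triangle K a b d" and col: "proper_colouring K 3 c"
  shows "cover_graph K"
proof -
  have "\<forall>x \<in> verts K. c x < 3"
    using col by (simp add: proper_colouring_def)
  then have covers_iff: "covers (colour_order K c) u v \<longleftrightarrow> (u, v) \<in> colour_orientation K c" for u v
    using covers_colour_order_if_orientation[OF assms(1-3), of c u v]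
      covers_colour_order_imp_orientation[of K c u v] by blast
  have edges_iff: "(u, v) \<in> edges K \<longleftrightarrow>
          (u, v) \<in> colour_orientation K c \<or> (v, u) \<in> colour_orientation K c" for u v
  proof
    assume "(u, v) \<in> edges K"
    moreover from this have "(v, u) \<in> edges K" "c u \<noteq> c v"
      using assms(1) col by (auto simp: proper_colouring_def dest: symD)
    ultimately show "(u, v) \<in> colour_orientation K c \<or> (v, u) \<in> colour_orientation K c"
      unfolding colour_orientation_def by auto
  next
    assume "(u, v) \<in> colour_orientation K c \<or> (v, u) \<in> colour_orientation K c"
    then show "(u, v) \<in> edges K"
      using assms(1) unfolding colour_orientation_def by (auto dest: symD)
  qed
  show ?thesis
    unfolding cover_graph_def
  proof (intro exI conjI ballI)
    show "partial_order_on (verts K) (colour_order K c)"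
      using assms(2) by (rule partial_order_colour_order)
  qed (simp add: edges_iff covers_iff)
qed

theorem theorem6:
  fixes G :: "'a graph" and H :: "'b graph"
  assumes "finite_simple_graph G" and "finite_simple_graph H"
  shows "(girth G = 3 \<and> girth H = 3 \<longrightarrow> \<not> cover_graph (direct_product G H))
       \<and> (girth G > 3 \<and> 3 \<ge> chromatic_number H \<longrightarrow> cover_graph (direct_product G H))"
proof (intro conjI impI)
  let ?P = "direct_product G H"
  have "finite_simple_graph ?P"
    using assms by (rule finite_simple_graph_direct_product)
  then have P_sub: "edges ?P \<subseteq> verts ?P \<times> verts ?P" and P_sym: "sym (edges ?P)"
    by (simp_all add: finite_simple_graph_def)
  show "\<not> cover_graph ?P" if girths: "girth G = 3 \<and> girth H = 3"
  proof -
    obtain a b c where "triangle G a b c"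
      using girths girth_eq_3_imp_triangle by blast
    moreover obtain a' b' c' where "triangle H a' b' c'"
      using girths girth_eq_3_imp_triangle by blast
    ultimately have "triangle ?P (a, a') (b, b') (c, c')"
      by (rule triangle_direct_product)
    then show ?thesis
      using cover_graph_triangle_free[OF _ P_sub] by blast
  qed
  show "cover_graph ?P" if girth_chi: "girth G > 3 \<and> 3 \<ge> chromatic_number H"
  proof -
    have "\<not> triangle G a b c" for a b c
    proof
      assume "triangle G a b c"
      with assms(1) have "girth G \<le> 3"
        unfolding finite_simple_graph_def by (blast intro: girth_le_3_if_triangle)
      with girth_chi show False by (simp add: not_le[symmetric])
    qed
    then have "\<not> triangle ?P u v w" for u v w
      using triangle_direct_product_fst by blast
    moreover obtain c where "proper_colouring H 3 c"
      using proper_colouring_chromatic_number[OF assms(2)] girth_chi proper_colouring_mono by metis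
    ultimately show ?thesis
      using cover_graph_if_triangle_free_3_colourable[OF P_sym P_sub]
        proper_colouring_direct_product_snd by blast
  qed
qed

end
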